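(* Let $\mathsf V$ be a quantale in which $k=\top$ is the top element and for which there is a sequence $(u_n)_{n\in\mathbb N}$ with $\bigvee_n u_n=k$, $u_n\ll k$ and $u_n\le u_{n+1}$ for all $n$. (1) If $X=(X,a)$ is a symmetric $\mathsf V$-category and $\varphi:E\rightharpoonup X$, $\psi:X\rightharpoonup E$ are modules with $\varphi\dashv\psi$, then $\varphi(x)=\psi(x)$ for all $x\in X$. (2) If $M$ is a sub-$\mathsf V$-category of a $\mathsf V$-category $Y=(Y,b)$ and $M$ is symmetric, then $\overline M$ (with the restricted structure) is symmetric. (3) In particular, for a symmetric $\mathsf V$-category $X$, its Cauchy completion $\widetilde X$ is symmetric.
   Context: A quantale $(\mathsf V,\otimes,k)$ is a complete anti-symmetric lattice with an associative, commutative operation $\otimes$ with neutral element $k$ distributing over arbitrary suprema; $\hom(u,-)$ is the right adjoint of $u\otimes-$. $u\ll x$ means: for every $S\subseteq\mathsf V$ with $x\le\bigvee S$ there is $s\in S$ with $u\le s$. A $\mathsf V$-category $(X,a)$ is a set with $a:X\times X\to\mathsf V$ such that $k\le a(x,x)$ and $a(x,y)\otimes a(y,z)\le a(x,z)$; it is symmetric if $a(x,y)=a(y,x)$ for all $x,y$; a sub-$\mathsf V$-category carries the restricted structure. $E=(\{\star\},k)$; modules $\varphi:E\rightharpoonup X$ and $\psi:X\rightharpoonup E$ are maps $X\to\mathsf V$ with $\varphi(x)\otimes a(x,y)\le\varphi(y)$ and $a(x,y)\otimes\psi(y)\le\psi(x)$; $\varphi\dashv\psi$ means $k\le\bigvee_x\varphi(x)\otimes\psi(x)$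 and $\psi(x)\otimes\varphi(y)\le a(x,y)$ for all $x,y$. For $M\subseteq Y$, $\overline M=\{y\in Y\mid k\le\bigvee_{z\in M}b(y,z)\otimes b(z,y)\}$. The Cauchy completion $\widetilde X$ is the set of right adjoint modules $\psi:X\rightharpoonup E$ with structure $[\psi,\psi']=\bigwedge_{x}\hom(\psi(x),\psi'(x))$. *)

theory Defs
  imports Main
begin

definition quantale :: "('v::complete_lattice \<Rightarrow> 'v \<Rightarrow> 'v) \<Rightarrow> 'v \<Rightarrow> bool" where
  "quantale tensor k \<longleftrightarrow>
     (\<forall>u v w. tensor (tensor u v) w = tensor u (tensor v w)) \<and>
     (\<forall>u v. tensor u v = tensor v u) \<and>
     (\<forall>u. tensor k u = u) \<and>
     (\<forall>u S. tensor u (Sup S) = Sup (tensor u ` S))"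

definition qhom :: "('v::complete_lattice \<Rightarrow> 'v \<Rightarrow> 'v) \<Rightarrow> 'v \<Rightarrow> 'v \<Rightarrow> 'v" where
  "qhom tensor u v = Sup {w. tensor u w \<le> v}"

definition way_below :: "'v::complete_lattice \<Rightarrow> 'v \<Rightarrow> bool" where
  "way_below u x \<longleftrightarrow> (\<forall>S. x \<le> Sup S \<longrightarrow> (\<exists>s\<in>S. u \<le> s))"

definition vcat :: "('v::complete_lattice \<Rightarrow> 'v \<Rightarrow> 'v) \<Rightarrow> 'v \<Rightarrow> 'a set \<Rightarrow> ('a \<Rightarrow> 'a \<Rightarrow> 'v) \<Rightarrow> bool" where
  "vcat tensor k X a \<longleftrightarrow>
     (\<forall>x\<in>X. k \<le> a x x) \<and>
     (\<forall>x\<in>X. \<forall>y\<in>X. \<forall>z\<in>X. tensor (a x y) (a y z) \<le> a x z)"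

definition vsymmetric :: "'a set \<Rightarrow> ('a \<Rightarrow> 'a \<Rightarrow> 'v) \<Rightarrow> bool" where
  "vsymmetric X a \<longleftrightarrow> (\<forall>x\<in>X. \<forall>y\<in>X. a x y = a y x)"

text \<open>Module E -/-> X.\<close>
definition left_module :: "('v::complete_lattice \<Rightarrow> 'v \<Rightarrow> 'v) \<Rightarrow> 'a set \<Rightarrow> ('a \<Rightarrow> 'a \<Rightarrow> 'v) \<Rightarrow> ('a \<Rightarrow> 'v) \<Rightarrow> bool" where
  "left_module tensor X a \<phi> \<longleftrightarrow> (\<forall>x\<in>X. \<forall>y\<in>X. tensor (\<phi> x) (a x y) \<le> \<phi> y)"

text \<open>Module X -/-> E.\<close>
definition right_module :: "('v::complete_lattice \<Rightarrow> 'v \<Rightarrow> 'v) \<Rightarrow> 'a set \<Rightarrow> ('a \<Rightarrow> 'a \<Rightarrow> 'v) \<Rightarrow> ('a \<Rightarrow> 'v) \<Rightarrow> bool" where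
  "right_module tensor X a \<psi> \<longleftrightarrow> (\<forall>x\<in>X. \<forall>y\<in>X. tensor (a x y) (\<psi> y) \<le> \<psi> x)"

definition module_adjoint :: "('v::complete_lattice \<Rightarrow> 'v \<Rightarrow> 'v) \<Rightarrow> 'v \<Rightarrow> 'a set \<Rightarrow> ('a \<Rightarrow> 'a \<Rightarrow> 'v) \<Rightarrow> ('a \<Rightarrow> 'v) \<Rightarrow> ('a \<Rightarrow> 'v) \<Rightarrow> bool" where
  "module_adjoint tensor k X a \<phi> \<psi> \<longleftrightarrow>
     k \<le> (SUP x\<in>X. tensor (\<phi> x) (\<psi> x)) \<and>
     (\<forall>x\<in>X. \<forall>y\<in>X. tensor (\<psi> x) (\<phi> y) \<le> a x y)"

definition vclosure :: "('v::complete_lattice \<Rightarrow> 'v \<Rightarrow> 'v) \<Rightarrow> 'v \<Rightarrow> 'b set \<Rightarrow> ('b \<Rightarrow> 'b \<Rightarrow> 'v) \<Rightarrow> 'b set \<Rightarrow> 'b set" where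
  "vclosure tensor k Y b M = {y\<in>Y. k \<le> (SUP z\<in>M. tensor (b y z) (b z y))}"

text \<open>Cauchy completion: right adjoint modules X -/-> E, represented as maps
  X \<Rightarrow> V (extended by bot outside X).\<close>
definition cauchy :: "('v::complete_lattice \<Rightarrow> 'v \<Rightarrow> 'v) \<Rightarrow> 'v \<Rightarrow> 'a set \<Rightarrow> ('a \<Rightarrow> 'a \<Rightarrow> 'v) \<Rightarrow> ('a \<Rightarrow> 'v) set" where
  "cauchy tensor k X a = {\<psi>. (\<forall>x. x \<notin> X \<longrightarrow> \<psi> x = bot) \<and> right_module tensor X a \<psi> \<and>
      (\<exists>\<phi>. left_module tensor X a \<phi> \<and> module_adjoint tensor k X a \<phi> \<psi>)}"

definition cauchy_struct :: "('v::complete_lattice \<Rightarrow> 'v \<Rightarrow> 'v) \<Rightarrow> 'a set \<Rightarrow> ('a \<Rightarrow> 'v) \<Rightarrow> ('a \<Rightarrow> 'v) \<Rightarrow> 'v" where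
  "cauchy_struct tensor X \<psi> \<psi>' = (INF x\<in>X. qhom tensor (\<psi> x) (\<psi>' x))"

end

theory Submission
  imports Defs
begin

text \<open>
  Write \<open>u\<^sub>n\<close> for the approximating sequence. Since \<open>u\<^sub>n \<ll> k\<close>, every inequality
  \<open>k \<le> \<Squnion>\<^sub>i f i\<close> provides an index \<open>i\<close> with \<open>u\<^sub>n \<le> f i\<close>; since \<open>k\<close> is the top element,
  \<open>u\<^sub>n \<le> s \<otimes> t\<close> forces \<open>u\<^sub>n \<le> s\<close> and \<open>u\<^sub>n \<le> t\<close>. Hence in the adjunction \<open>\<phi> \<dashv> \<psi>\<close> there
  is some \<open>y\<close> with \<open>u\<^sub>n \<otimes> u\<^sub>n \<le> \<phi>(y) \<otimes> \<phi>(y)\<close>, and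
  \<open>u\<^sub>n \<otimes> u\<^sub>n \<otimes> \<psi>(x) \<le> \<phi>(y) \<otimes> a(x,y) \<le> \<phi>(x)\<close> by symmetry; as the \<open>u\<^sub>n \<otimes> u\<^sub>n\<close> still
  have supremum \<open>k\<close>, this gives \<open>\<psi> \<le> \<phi>\<close>, and the reverse inequality is the same argument
  applied to the adjunction \<open>\<psi> \<dashv> \<phi>\<close>, which symmetry provides. The closure is treated in the
  same way, using two approximating points of \<open>M\<close>. For the Cauchy completion,
  \<open>[\<psi>,\<psi>'] = \<Squnion>\<^sub>y \<phi>(y) \<otimes> \<psi>'(y)\<close>, which is symmetric once \<open>\<phi> = \<psi>\<close>.
\<close>

locale unital_quantale =
  fixes T :: "'v::complete_lattice \<Rightarrow> 'v \<Rightarrow> 'v" and k :: 'v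
  assumes quantale: "quantale T k"
begin

lemma tensor_assoc: "T (T u v) w = T u (T v w)"
  using quantale unfolding quantale_def by blast

lemma tensor_commute: "T u v = T v u"
  using quantale unfolding quantale_def by blast

lemma tensor_left_commute: "T u (T v w) = T v (T u w)"
  by (metis tensor_assoc tensor_commute)

lemmas tensor_ac = tensor_assoc tensor_commute tensor_left_commute

lemma tensor_unit_left: "T k u = u"
  using quantale unfolding quantale_def by blast

lemma tensor_unit_right: "T u k = u"
  by (metis tensor_unit_left tensor_commute)

lemma tensor_Sup_right: "T u (Sup S) = Sup (T u ` S)"
  using quantale unfolding quantale_def by blast

lemma tensor_SUP_right: "T u (SUP i\<in>I. f i) = (SUP i\<in>I. T u (f i))"
  by (simp add: tensor_Sup_right image_image)

lemma tensor_SUP_left: "T (SUP i\<in>I. f i) u = (SUP i\<in>I. T (f i) u)"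
  by (simp add: tensor_commute[of _ u] tensor_SUP_right)

lemma tensor_mono_right:
  assumes "v \<le> w"
  shows "T u v \<le> T u w"
proof -
  have "T u w = sup (T u v) (T u w)"
    using tensor_Sup_right[of u "{v, w}"] assms by (simp add: sup.absorb2)
  then show ?thesis
    by (metis sup.cobounded1)
qed

lemma tensor_mono: "u \<le> u' \<Longrightarrow> v \<le> v' \<Longrightarrow> T u v \<le> T u' v'"
  by (metis tensor_mono_right tensor_commute order_trans)

lemma le_qhom: "T u w \<le> v \<Longrightarrow> w \<le> qhom T u v"
  unfolding qhom_def by (rule Sup_upper) simp

lemma tensor_qhom_le: "T u (qhom T u v) \<le> v"
  unfolding qhom_def tensor_Sup_right by (auto intro: Sup_least)

lemma cauchy_struct_eq_SUP:
  assumes "right_module T X a \<psi>'" and "module_adjoint T k X a \<phi> \<psi>"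
  shows "cauchy_struct T X \<psi> \<psi>' = (SUP y\<in>X. T (\<phi> y) (\<psi>' y))"
proof (rule antisym)
  let ?t = "cauchy_struct T X \<psi> \<psi>'"
  have "?t = T ?t k"
    by (simp add: tensor_unit_right)
  also have "\<dots> \<le> T ?t (SUP y\<in>X. T (\<phi> y) (\<psi> y))"
    using assms(2) unfolding module_adjoint_def by (intro tensor_mono_right) auto
  also have "\<dots> = (SUP y\<in>X. T (\<phi> y) (T (\<psi> y) ?t))"
    by (simp add: tensor_SUP_right tensor_ac)
  also have "\<dots> \<le> (SUP y\<in>X. T (\<phi> y) (\<psi>' y))"
  proof (rule SUP_mono)
    fix y assume "y \<in> X"
    then have "?t \<le> qhom T (\<psi> y) (\<psi>' y)"
      unfolding cauchy_struct_def by (rule INF_lower)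
    then have "T (\<psi> y) ?t \<le> \<psi>' y"
      by (meson tensor_mono_right tensor_qhom_le order_trans)
    then show "\<exists>y'\<in>X. T (\<phi> y) (T (\<psi> y) ?t) \<le> T (\<phi> y') (\<psi>' y')"
      using \<open>y \<in> X\<close> by (blast intro: tensor_mono_right)
  qed
  finally show "?t \<le> (SUP y\<in>X. T (\<phi> y) (\<psi>' y))" .
next
  show "(SUP y\<in>X. T (\<phi> y) (\<psi>' y)) \<le> cauchy_struct T X \<psi> \<psi>'"
    unfolding cauchy_struct_def
  proof (intro SUP_least INF_greatest le_qhom)
    fix x y assume x: "x \<in> X" and y: "y \<in> X"
    have "T (\<psi> x) (T (\<phi> y) (\<psi>' y)) = T (T (\<psi> x) (\<phi> y)) (\<psi>' y)"
      by (simp add: tensor_assoc)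
    also have "\<dots> \<le> T (a x y) (\<psi>' y)"
      using assms(2) x y unfolding module_adjoint_def by (intro tensor_mono) auto
    also have "\<dots> \<le> \<psi>' x"
      using assms(1) x y unfolding right_module_def by auto
    finally show "T (\<psi> x) (T (\<phi> y) (\<psi>' y)) \<le> \<psi>' x" .
  qed
qed

lemma symmetric_right_module_imp_left_module:
  assumes "vsymmetric X a" and "right_module T X a \<psi>"
  shows "left_module T X a \<psi>"
  unfolding left_module_def
proof (intro ballI)
  fix x y assume xy: "x \<in> X" "y \<in> X"
  then have "T (\<psi> x) (a x y) = T (a y x) (\<psi> x)"
    using assms(1) unfolding vsymmetric_def by (simp add: tensor_commute)
  also have "\<dots> \<le> \<psi> y"
    using assms(2) xy unfolding right_module_def by blast
  finally show "T (\<psi> x) (a x y) \<le> \<psi> y" .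
qed

lemma symmetric_module_adjoint_swap:
  assumes "vsymmetric X a" and "module_adjoint T k X a \<phi> \<psi>"
  shows "module_adjoint T k X a \<psi> \<phi>"
  unfolding module_adjoint_def
proof (intro conjI ballI)
  show "k \<le> (SUP x\<in>X. T (\<psi> x) (\<phi> x))"
    using assms(2) unfolding module_adjoint_def by (simp add: tensor_commute)
  fix x y assume xy: "x \<in> X" "y \<in> X"
  then have "T (\<phi> x) (\<psi> y) \<le> a y x"
    using assms(2) unfolding module_adjoint_def by (simp add: tensor_commute)
  then show "T (\<phi> x) (\<psi> y) \<le> a x y"
    using assms(1) xy unfolding vsymmetric_def by simp
qed

end

locale integral_quantale = unital_quantale +
  assumes unit_top: "k = top"
begin

lemma tensor_le_left: "T u v \<le> u"
proof -
  have "T u v \<le> T u k"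
    by (rule tensor_mono_right) (simp add: unit_top)
  then show ?thesis
    by (simp add: tensor_unit_right)
qed

lemma tensor_le_right: "T u v \<le> v"
  by (metis tensor_le_left tensor_commute)

lemma le_if_tensor_unit_approx:
  assumes "(SUP n. w n) = k" and "\<And>n. T (w n) c \<le> d"
  shows "c \<le> d"
proof -
  have "c = (SUP n. T (w n) c)"
    using assms(1) by (simp add: tensor_SUP_left[symmetric] tensor_unit_left)
  also have "\<dots> \<le> d"
    using assms(2) by (rule SUP_least)
  finally show ?thesis .
qed

lemma SUP_tensor_square_eq_unit:
  assumes "(SUP n. w n) = k" and "\<And>n. w n \<le> w (Suc n)"
  shows "(SUP n. T (w n) (w n)) = k"
proof -
  have mono: "n \<le> m \<Longrightarrow> w n \<le> w m" for n m
    using assms(2) by (metis lift_Suc_mono_le)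
  have "k = T (SUP n. w n) (SUP m. w m)"
    using assms(1) by (simp add: tensor_unit_left)
  also have "\<dots> = (SUP m. SUP n. T (w n) (w m))"
    by (simp add: tensor_SUP_left tensor_SUP_right)
  also have "\<dots> \<le> (SUP n. T (w n) (w n))"
  proof (intro SUP_least)
    fix n m
    have "T (w n) (w m) \<le> T (w (max n m)) (w (max n m))"
      by (intro tensor_mono mono) auto
    also have "\<dots> \<le> (SUP n. T (w n) (w n))"
      by (rule SUP_upper) simp
    finally show "T (w n) (w m) \<le> (SUP n. T (w n) (w n))" .
  qed
  finally show ?thesis
    by (simp add: unit_top top.extremum_unique)
qed

end

locale approximated_integral_quantale = integral_quantale +
  fixes u :: "nat \<Rightarrow> 'v::complete_lattice"
  assumes SUP_approx: "(SUP n. u n) = k"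
    and approx_way_below: "way_below (u n) k"
    and approx_mono: "u n \<le> u (Suc n)"
begin

lemma approx_le_SUP:
  assumes "k \<le> (SUP x\<in>A. f x)"
  obtains x where "x \<in> A" and "u n \<le> f x"
  using approx_way_below[of n] assms unfolding way_below_def by (metis imageE)

lemma SUP_approx_square: "(SUP n. T (u n) (u n)) = k"
  using SUP_tensor_square_eq_unit SUP_approx approx_mono by blast

lemma le_if_approx_square:
  assumes "\<And>n. T (T (u n) (u n)) c \<le> d"
  shows "c \<le> d"
  using le_if_tensor_unit_approx[OF SUP_approx_square] assms .

lemma le_if_approx_fourth_power:
  assumes "\<And>n. T (T (T (u n) (u n)) (T (u n) (u n))) c \<le> d"
  shows "c \<le> d"
proof (rule le_if_tensor_unit_approx[OF SUP_tensor_square_eq_unit[OF SUP_approx_square]])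
  show "T (u n) (u n) \<le> T (u (Suc n)) (u (Suc n))" for n
    by (intro tensor_mono approx_mono)
qed (fact assms)

lemma right_adjoint_le_left_adjoint:
  assumes "vsymmetric X a" and "left_module T X a \<phi>"
    and "module_adjoint T k X a \<phi> \<psi>" and x: "x \<in> X"
  shows "\<psi> x \<le> \<phi> x"
proof (rule le_if_approx_square)
  fix n
  obtain y where y: "y \<in> X" and "u n \<le> T (\<phi> y) (\<psi> y)"
    using assms(3) approx_le_SUP unfolding module_adjoint_def by blast
  then have "u n \<le> \<phi> y"
    using tensor_le_left order_trans by blast
  then have "T (T (u n) (u n)) (\<psi> x) \<le> T (T (\<phi> y) (\<phi> y)) (\<psi> x)"
    by (intro tensor_mono order_refl)
  also have "\<dots> = T (\<phi> y) (T (\<psi> x) (\<phi> y))"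
    by (simp add: tensor_ac)
  also have "\<dots> \<le> T (\<phi> y) (a y x)"
    using assms(1,3) x y unfolding module_adjoint_def vsymmetric_def
    by (intro tensor_mono_right) auto
  also have "\<dots> \<le> \<phi> x"
    using assms(2) x y unfolding left_module_def by auto
  finally show "T (T (u n) (u n)) (\<psi> x) \<le> \<phi> x" .
qed

lemma symmetric_adjoint_modules_eq:
  assumes "vsymmetric X a" and "left_module T X a \<phi>" and "right_module T X a \<psi>"
    and "module_adjoint T k X a \<phi> \<psi>" and "x \<in> X"
  shows "\<phi> x = \<psi> x"
proof (rule antisym)
  show "\<psi> x \<le> \<phi> x"
    using assms(1,2,4,5) by (rule right_adjoint_le_left_adjoint)
  have "left_module T X a \<psi>"
    using assms(1,3) by (rule symmetric_right_module_imp_left_module)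
  moreover have "module_adjoint T k X a \<psi> \<phi>"
    using assms(1,4) by (rule symmetric_module_adjoint_swap)
  ultimately show "\<phi> x \<le> \<psi> x"
    by (rule right_adjoint_le_left_adjoint[OF assms(1) _ _ assms(5)])
qed

lemma vclosure_le_sym:
  assumes Y: "vcat T k Y b" and M: "M \<subseteq> Y" "vsymmetric M b"
    and y: "y \<in> vclosure T k Y b M" and y': "y' \<in> vclosure T k Y b M"
  shows "b y y' \<le> b y' y"
proof (rule le_if_approx_fourth_power)
  fix n
  have yY: "y \<in> Y" "y' \<in> Y"
    using y y' unfolding vclosure_def by auto
  have trans: "\<And>p q r. p \<in> Y \<Longrightarrow> q \<in> Y \<Longrightarrow> r \<in> Y \<Longrightarrow> T (b p q) (b q r) \<le> b p r"
    using Y unfolding vcat_def by blast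
  obtain z where z: "z \<in> M" and "u n \<le> T (b y z) (b z y)"
    using y approx_le_SUP unfolding vclosure_def by blast
  then have uq: "u n \<le> b z y"
    using tensor_le_right order_trans by blast
  obtain z' where z': "z' \<in> M" and "u n \<le> T (b y' z') (b z' y')"
    using y' approx_le_SUP unfolding vclosure_def by blast
  then have up: "u n \<le> b y' z'"
    using tensor_le_left order_trans by blast
  have zY: "z \<in> Y" "z' \<in> Y"
    using z z' M(1) by auto
  let ?p = "b y' z'" and ?q = "b z y"
  have "T (T (T (u n) (u n)) (T (u n) (u n))) (b y y') \<le> T (T (T ?q ?p) (T ?q ?p)) (b y y')"
    by (intro tensor_mono up uq order_refl)
  also have "\<dots> = T ?p (T (T ?q (T (b y y') ?p)) ?q)"
    by (simp add: tensor_ac)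
  also have "\<dots> \<le> T ?p (T (T ?q (b y z')) ?q)"
    using trans[of y y' z'] yY zY by (intro tensor_mono order_refl) auto
  also have "\<dots> \<le> T ?p (T (b z z') ?q)"
    using trans[of z y z'] yY zY by (intro tensor_mono order_refl) auto
  also have "\<dots> = T ?p (T (b z' z) ?q)"
    using M(2) z z' unfolding vsymmetric_def by simp
  also have "\<dots> \<le> T ?p (b z' y)"
    using trans[of z' z y] yY zY by (intro tensor_mono order_refl) auto
  also have "\<dots> \<le> b y' y"
    using trans[of y' z' y] yY zY by auto
  finally show "T (T (T (u n) (u n)) (T (u n) (u n))) (b y y') \<le> b y' y" .
qed

lemma vsymmetric_vclosure:
  assumes "vcat T k Y b" and "M \<subseteq> Y" and "vsymmetric M b"
  shows "vsymmetric (vclosure T k Y b M) b"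
  unfolding vsymmetric_def using vclosure_le_sym[OF assms] by (blast intro: antisym)

lemma cauchy_struct_eq_SUP_tensor:
  assumes "vsymmetric X a" and \<psi>: "\<psi> \<in> cauchy T k X a" and \<psi>': "\<psi>' \<in> cauchy T k X a"
  shows "cauchy_struct T X \<psi> \<psi>' = (SUP y\<in>X. T (\<psi> y) (\<psi>' y))"
proof -
  obtain \<phi> where "right_module T X a \<psi>" "left_module T X a \<phi>" "module_adjoint T k X a \<phi> \<psi>"
    using \<psi> unfolding cauchy_def by blast
  moreover have "right_module T X a \<psi>'"
    using \<psi>' unfolding cauchy_def by blast
  ultimately show ?thesis
    using assms(1) by (simp add: cauchy_struct_eq_SUP symmetric_adjoint_modules_eq cong: SUP_cong)
qed

lemma vsymmetric_cauchy:
  assumes "vsymmetric X a"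
  shows "vsymmetric (cauchy T k X a) (cauchy_struct T X)"
  using cauchy_struct_eq_SUP_tensor[OF assms] unfolding vsymmetric_def
  by (simp add: tensor_commute)

end

theorem corollary3p20:
  fixes tensor :: "'v::complete_lattice \<Rightarrow> 'v \<Rightarrow> 'v" and k :: 'v
  assumes "quantale tensor k"
    and "k = top"
    and "\<exists>u :: nat \<Rightarrow> 'v. (SUP n. u n) = k \<and> (\<forall>n. way_below (u n) k) \<and> (\<forall>n. u n \<le> u (Suc n))"
  shows "(\<forall>(X :: 'a set) a \<phi> \<psi>. vcat tensor k X a \<and> vsymmetric X a \<and>
            left_module tensor X a \<phi> \<and> right_module tensor X a \<psi> \<and>
            module_adjoint tensor k X a \<phi> \<psi> \<longrightarrow> (\<forall>x\<in>X. \<phi> x = \<psi> x))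
      \<and> (\<forall>(Y :: 'b set) b M. vcat tensor k Y b \<and> M \<subseteq> Y \<and> vsymmetric M b \<longrightarrow>
            vsymmetric (vclosure tensor k Y b M) b)
      \<and> (\<forall>(X :: 'a set) a. vcat tensor k X a \<and> vsymmetric X a \<longrightarrow>
            vsymmetric (cauchy tensor k X a) (cauchy_struct tensor X))"
proof -
  obtain u :: "nat \<Rightarrow> 'v" where u: "(SUP n. u n) = k" "\<And>n. way_below (u n) k" "\<And>n. u n \<le> u (Suc n)"
    using assms(3) by auto
  interpret approximated_integral_quantale tensor k u
    by unfold_locales (fact assms(1) assms(2) u)+
  show ?thesis
  proof (intro conjI allI impI ballI)
    show "\<phi> x = \<psi> x"
      if "vcat tensor k X a \<and> vsymmetric X a \<and> left_module tensor X a \<phi> \<and>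
          right_module tensor X a \<psi> \<and> module_adjoint tensor k X a \<phi> \<psi>" and "x \<in> X"
      for X :: "'a set" and a \<phi> \<psi> x
      using that symmetric_adjoint_modules_eq[of X a \<phi> \<psi> x] by simp
    show "vsymmetric (vclosure tensor k Y b M) b"
      if "vcat tensor k Y b \<and> M \<subseteq> Y \<and> vsymmetric M b" for Y :: "'b set" and b M
      using that by (intro vsymmetric_vclosure) simp_all
    show "vsymmetric (cauchy tensor k X a) (cauchy_struct tensor X)"
      if "vcat tensor k X a \<and> vsymmetric X a" for X :: "'a set" and a
      using that by (intro vsymmetric_cauchy) simp
  qed
qed

end
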